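(* Let $(X,d)$ be a geometrically doubling metric space and let $\mathscr{D}=\{Q^k_\alpha\}$ be a system of dyadic cubes with parameters $\delta\in(0,1)$ and $0<c_1\le C_1<\infty$. Let $m\in\mathbb{Z}$ and let $Q^m_\alpha\in\mathscr{D}$ be a dyadic cube of generation $m$. Then both $Q^m_\alpha$ and $X\setminus Q^m_\alpha$ are d-plump with parameters $\delta$, $m$, $b_0=c_1$ and $B_0=c_1+C_1$. In particular (provided $\operatorname{diam}(Q^m_\alpha)>0$), $Q^m_\alpha$ is plump with parameters $$b=\frac{\delta c_1}{c_1+C_1}\quad\text{and}\quad R=\frac{c_1+C_1}{2\delta C_1}\operatorname{diam}(Q^m_\alpha).$$
   Context: For $x\in X$ and $r>0$, $B(x,r)=\{y\in X: d(y,x)<r\}$. $(X,d)$ is geometrically doubling if there is $A_1\in\mathbb{N}$ such that every ball $B(x,r)$ can be covered by at most $A_1$ balls of radius $r/2$. A system of dyadic cubes with parameters $\delta\in(0,1)$ and $0<c_1\le C_1<\infty$ is a family of Borel sets $Q^k_\alpha$, $k\in\mathbb{Z}$, $\alpha\in I(k)$ (with $I(k)$ at most countable), together with points $x^k_\alpha\in X$, such that: (i) for every $k$, $X=\bigcup_{\alpha\in I(k)}Q^k_\alpha$ as a disjoint union; (ii) if $\ell\ge k$ then either $Q^\ell_\beta\subseteq Q^k_\alpha$ or $Q^\ell_\beta\cap Q^k_\alpha=\emptyset$; (iii) $B(x^k_\alpha,c_1\delta^k)\subseteq Q^k_\alpha\subseteq B(x^k_\alpha,C_1\delta^k)=:B(Q^k_\alpha)$;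 (iv) if $\ell\ge k$ and $Q^\ell_\beta\subseteq Q^k_\alpha$ then $B(Q^\ell_\beta)\subseteq B(Q^k_\alpha)$. $Q^k_\alpha$ is called a dyadic cube of generation $k$. A set $E\subseteq X$ is plump with parameters $R>0$, $b\in(0,1)$ if for all $y\in E$ and $0<r\le R$ there is $z\in X$ with $B(z,br)\subseteq B(y,r)\cap E$. A set $E$ is d-plump with parameters $\delta\in(0,1)$, $m\in\mathbb{Z}$, $0<b_0\le B_0<\infty$ if for all $y\in E$ and all integers $k\ge m$ there is $z\in X$ with $B(z,b_0\delta^k)\subseteq B(y,B_0\delta^k)\cap E$. *)

theory Defs
  imports "HOL-Analysis.Analysis"
begin

text \<open>The metric space X is the whole type 'a :: metric_space; B(x,r) is ball x r.\<close>

definition geometrically_doubling :: "'a::metric_space itself \<Rightarrow> bool" where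
  "geometrically_doubling _ \<longleftrightarrow>
     (\<exists>A1::nat. \<forall>(x::'a) r. r > 0 \<longrightarrow>
        (\<exists>C. finite C \<and> card C \<le> A1 \<and> ball x r \<subseteq> (\<Union>c\<in>C. ball c (r/2))))"

definition dyadic_system ::
  "real \<Rightarrow> real \<Rightarrow> real \<Rightarrow> (int \<Rightarrow> 'i set) \<Rightarrow> (int \<Rightarrow> 'i \<Rightarrow> 'a::metric_space set)
     \<Rightarrow> (int \<Rightarrow> 'i \<Rightarrow> 'a) \<Rightarrow> bool" where
  "dyadic_system \<delta> c1 C1 I Q x \<longleftrightarrow>
     0 < \<delta> \<and> \<delta> < 1 \<and> 0 < c1 \<and> c1 \<le> C1 \<and>
     (\<forall>k. countable (I k)) \<and>
     (\<forall>k. \<forall>\<alpha>\<in>I k. Q k \<alpha> \<in> sets borel) \<and>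
     (\<forall>k. (\<Union>\<alpha>\<in>I k. Q k \<alpha>) = UNIV) \<and>
     (\<forall>k. \<forall>\<alpha>\<in>I k. \<forall>\<beta>\<in>I k. \<alpha> \<noteq> \<beta> \<longrightarrow> Q k \<alpha> \<inter> Q k \<beta> = {}) \<and>
     (\<forall>k l. k \<le> l \<longrightarrow> (\<forall>\<alpha>\<in>I k. \<forall>\<beta>\<in>I l. Q l \<beta> \<subseteq> Q k \<alpha> \<or> Q l \<beta> \<inter> Q k \<alpha> = {})) \<and>
     (\<forall>k. \<forall>\<alpha>\<in>I k. ball (x k \<alpha>) (c1 * \<delta> powr of_int k) \<subseteq> Q k \<alpha> \<and>
                    Q k \<alpha> \<subseteq> ball (x k \<alpha>) (C1 * \<delta> powr of_int k)) \<and>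
     (\<forall>k l. k \<le> l \<longrightarrow> (\<forall>\<alpha>\<in>I k. \<forall>\<beta>\<in>I l. Q l \<beta> \<subseteq> Q k \<alpha> \<longrightarrow>
          ball (x l \<beta>) (C1 * \<delta> powr of_int l) \<subseteq> ball (x k \<alpha>) (C1 * \<delta> powr of_int k)))"

definition plump :: "real \<Rightarrow> real \<Rightarrow> 'a::metric_space set \<Rightarrow> bool" where
  "plump R b E \<longleftrightarrow> 0 < R \<and> 0 < b \<and> b < 1 \<and>
     (\<forall>y\<in>E. \<forall>r. 0 < r \<and> r \<le> R \<longrightarrow> (\<exists>z. ball z (b * r) \<subseteq> ball y r \<inter> E))"

definition d_plump :: "real \<Rightarrow> int \<Rightarrow> real \<Rightarrow> real \<Rightarrow> 'a::metric_space set \<Rightarrow> bool" where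
  "d_plump \<delta> m b0 B0 E \<longleftrightarrow> 0 < \<delta> \<and> \<delta> < 1 \<and> 0 < b0 \<and> b0 \<le> B0 \<and>
     (\<forall>y\<in>E. \<forall>k::int. k \<ge> m \<longrightarrow>
        (\<exists>z. ball z (b0 * \<delta> powr of_int k) \<subseteq> ball y (B0 * \<delta> powr of_int k) \<inter> E))"

end

theory Submission imports Defs begin

(* Fix a point y and a generation k \<ge> m.  The generation-k cube Q k \<beta>
   containing y has centre within C1 \<delta>^k of y, so its inner ball of radius c1 \<delta>^k lies
   in ball y ((c1 + C1) \<delta>^k) and in Q k \<beta>.  By the nesting property Q k \<beta> lies either
   inside Q m \<alpha> or inside its complement; hence both sets are d-plump.  We phrase this
   for every set E "resolved" by the cubes of generations \<ge> m, i.e. a union of cubes of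
   each such generation, and check that Q m \<alpha> and its complement are resolved.
   Plumpness then follows from d-plumpness by a general scaling argument: a radius
   r \<le> B0 \<delta>^(m-1) is squeezed as B0 \<delta>^k \<le> r \<le> B0 \<delta>^(k-1) with k \<ge> m, which costs
   the factor \<delta> in b = \<delta> b0 / B0.  Finally diam Q m \<alpha> \<le> 2 C1 \<delta>^m shows that the
   radius R of the theorem is at most (c1 + C1) \<delta>^(m-1). *)

lemma powr_le_iff_base_lt1:
  fixes d t a :: real
  assumes "0 < d" "d < 1" "0 < t"
  shows "d powr a \<le> t \<longleftrightarrow> ln t / ln d \<le> a"
proof -
  have "ln d < 0" using assms by simp
  have "d powr a \<le> t \<longleftrightarrow> ln (d powr a) \<le> ln t"
    using assms by (simp only: ln_le_cancel_iff powr_gt_zero)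
  also have "\<dots> \<longleftrightarrow> a * ln d \<le> ln t" using assms by (simp add: ln_powr)
  also have "\<dots> \<longleftrightarrow> ln t / ln d \<le> a" using \<open>ln d < 0\<close> by (simp add: neg_divide_le_eq)
  finally show ?thesis .
qed

text \<open>Every level t \<le> d^(m-1) is trapped between two consecutive powers d^k, d^(k-1)
  with k \<ge> m: this selects the dyadic generation matching a given radius.\<close>

lemma powr_bracket:
  fixes d t :: real and m :: int
  assumes "0 < d" "d < 1" "0 < t" "t \<le> d powr of_int (m - 1)"
  shows "\<exists>k\<ge>m. d powr of_int k \<le> t \<and> t \<le> d powr of_int (k - 1)"
proof -
  define k0 where "k0 = \<lceil>ln t / ln d\<rceil>"
  have below: "d powr of_int k0 \<le> t"
    using powr_le_iff_base_lt1[OF assms(1-3)] k0_def by simp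
  have above: "\<not> d powr of_int (k0 - 1) \<le> t"
    using powr_le_iff_base_lt1[OF assms(1-3)] k0_def by (simp add: ceiling_less_cancel) linarith
  show ?thesis
  proof (cases "m \<le> k0")
    case True
    then show ?thesis using below above by (intro exI[of _ k0]) auto
  next
    case False
    then have "d powr of_int m \<le> d powr of_int k0"
      using assms by (intro powr_mono') auto
    then show ?thesis using below assms(4) by (intro exI[of _ m]) auto
  qed
qed

lemma diameter_le_of_subset_ball:
  fixes S :: "'a::metric_space set"
  assumes "S \<subseteq> ball c r" "0 \<le> r"
  shows "diameter S \<le> 2 * r"
proof -
  have "dist u v \<le> 2 * r" if "u \<in> S" "v \<in> S" for u v
  proof -
    have "dist c u < r" "dist c v < r" using assms(1) that by auto
    then show ?thesis using dist_triangle3[of u v c] by linarith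
  qed
  then show ?thesis
    using assms(2) unfolding diameter_def by (auto intro: cSUP_least)
qed

lemma
  assumes "dyadic_system \<delta> c1 C1 I Q x"
  shows dyadic_param: "0 < \<delta>" "\<delta> < 1" "0 < c1" "c1 \<le> C1"
    and dyadic_cover: "(\<Union>\<beta>\<in>I k. Q k \<beta>) = UNIV"
    and dyadic_nested: "k \<le> l \<Longrightarrow> \<alpha> \<in> I k \<Longrightarrow> \<beta> \<in> I l \<Longrightarrow>
                          Q l \<beta> \<subseteq> Q k \<alpha> \<or> Q l \<beta> \<inter> Q k \<alpha> = {}"
    and dyadic_inner_ball: "\<beta> \<in> I k \<Longrightarrow> ball (x k \<beta>) (c1 * \<delta> powr of_int k) \<subseteq> Q k \<beta>"
    and dyadic_outer_ball: "\<beta> \<in> I k \<Longrightarrow> Q k \<beta> \<subseteq> ball (x k \<beta>) (C1 * \<delta> powr of_int k)"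
  using assms unfolding dyadic_system_def by (elim conjE; metis)+

lemma dyadic_inner_ball_near:
  assumes D: "dyadic_system \<delta> c1 C1 I Q x" and \<beta>: "\<beta> \<in> I k" and y: "y \<in> Q k \<beta>"
  shows "ball (x k \<beta>) (c1 * \<delta> powr of_int k)
           \<subseteq> ball y ((c1 + C1) * \<delta> powr of_int k) \<inter> Q k \<beta>"
proof -
  have "dist y (x k \<beta>) < C1 * \<delta> powr of_int k"
    using dyadic_outer_ball[OF D \<beta>] y by (auto simp: dist_commute)
  have "ball (x k \<beta>) (c1 * \<delta> powr of_int k) \<subseteq> ball y ((c1 + C1) * \<delta> powr of_int k)"
  proof
    fix z assume "z \<in> ball (x k \<beta>) (c1 * \<delta> powr of_int k)"
    then have "dist (x k \<beta>) z < c1 * \<delta> powr of_int k" by simp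
    with \<open>dist y (x k \<beta>) < C1 * \<delta> powr of_int k\<close> dist_triangle[of y z "x k \<beta>"]
    show "z \<in> ball y ((c1 + C1) * \<delta> powr of_int k)" by (simp add: algebra_simps)
  qed
  with dyadic_inner_ball[OF D \<beta>] show ?thesis by blast
qed

definition dyadic_resolved :: "(int \<Rightarrow> 'i set) \<Rightarrow> (int \<Rightarrow> 'i \<Rightarrow> 'a set) \<Rightarrow> int \<Rightarrow> 'a set \<Rightarrow> bool"
  where "dyadic_resolved I Q m E \<longleftrightarrow>
           (\<forall>k\<ge>m. \<forall>\<beta>\<in>I k. Q k \<beta> \<subseteq> E \<or> Q k \<beta> \<inter> E = {})"

lemma dyadic_resolved_complement:
  "dyadic_resolved I Q m E \<Longrightarrow> dyadic_resolved I Q m (UNIV - E)"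
  unfolding dyadic_resolved_def by blast

lemma dyadic_resolved_cube:
  assumes "dyadic_system \<delta> c1 C1 I Q x" "\<alpha> \<in> I m"
  shows "dyadic_resolved I Q m (Q m \<alpha>)"
  using dyadic_nested[OF assms(1) _ assms(2)] unfolding dyadic_resolved_def by blast

text \<open>The core of the proposition: every resolved set is d-plump with b0 = c1 and
  B0 = c1 + C1, the witness being the inner ball of the cube around the given point.\<close>

lemma dyadic_resolved_d_plump:
  assumes D: "dyadic_system \<delta> c1 C1 I Q x" and E: "dyadic_resolved I Q m E"
  shows "d_plump \<delta> m c1 (c1 + C1) E"
  unfolding d_plump_def
proof (intro conjI ballI allI impI)
  fix y k assume y: "y \<in> E" and k: "m \<le> k"
  obtain \<beta> where \<beta>: "\<beta> \<in> I k" "y \<in> Q k \<beta>"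
    using dyadic_cover[OF D, of k] by blast
  then have "Q k \<beta> \<subseteq> E" using E k y unfolding dyadic_resolved_def by blast
  with dyadic_inner_ball_near[OF D \<beta>]
  show "\<exists>z. ball z (c1 * \<delta> powr of_int k) \<subseteq> ball y ((c1 + C1) * \<delta> powr of_int k) \<inter> E"
    by blast
qed (use dyadic_param[OF D] in auto)

lemma d_plump_imp_plump:
  assumes P: "d_plump \<delta> m b0 B0 E" and R: "0 < R" "R \<le> B0 * \<delta> powr of_int (m - 1)"
  shows "plump R (\<delta> * b0 / B0) E"
proof -
  have d0: "0 < \<delta>" "\<delta> < 1" and b0: "0 < b0" "b0 \<le> B0"
    using P unfolding d_plump_def by auto
  have "\<delta> * b0 < B0" using d0 b0 mult_strict_right_mono[of \<delta> 1 b0] by linarith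
  then have ratio: "0 < \<delta> * b0 / B0" "\<delta> * b0 / B0 < 1" using d0 b0 by auto
  have "\<exists>z. ball z (\<delta> * b0 / B0 * r) \<subseteq> ball y r \<inter> E"
    if y: "y \<in> E" and r: "0 < r" "r \<le> R" for y r
  proof -
    define t where "t = r / B0"
    have "0 < t" using r b0 t_def by simp
    moreover have "t \<le> \<delta> powr of_int (m - 1)"
      using R r b0 unfolding t_def by (simp add: divide_le_eq mult.commute)
    ultimately obtain k where k: "m \<le> k" "\<delta> powr of_int k \<le> t" "t \<le> \<delta> powr of_int (k - 1)"
      using powr_bracket[OF d0] by blast
    obtain z where z: "ball z (b0 * \<delta> powr of_int k) \<subseteq> ball y (B0 * \<delta> powr of_int k) \<inter> E"
      using P y k(1) unfolding d_plump_def by blast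
    have "\<delta> * t \<le> \<delta> * \<delta> powr of_int (k - 1)" using k(3) d0 by simp
    also have "\<dots> = \<delta> powr of_int k" using d0 by (simp add: powr_diff)
    finally have "b0 * (\<delta> * t) \<le> b0 * \<delta> powr of_int k" using b0 by simp
    moreover have "\<delta> * b0 / B0 * r = b0 * (\<delta> * t)" unfolding t_def by simp
    ultimately have "\<delta> * b0 / B0 * r \<le> b0 * \<delta> powr of_int k" by simp
    moreover have "B0 * \<delta> powr of_int k \<le> r"
      using k(2) b0 unfolding t_def by (simp add: field_simps)
    ultimately have "ball z (\<delta> * b0 / B0 * r) \<subseteq> ball z (b0 * \<delta> powr of_int k)"
      and "ball y (B0 * \<delta> powr of_int k) \<subseteq> ball y r"
      by (auto intro: subset_ball)
    with z show ?thesis by blast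
  qed
  then show ?thesis unfolding plump_def using R ratio by blast
qed

lemma dyadic_cube_diameter:
  assumes D: "dyadic_system \<delta> c1 C1 I Q x" and \<alpha>: "\<alpha> \<in> I m"
  shows "diameter (Q m \<alpha>) \<le> 2 * (C1 * \<delta> powr of_int m)"
proof (rule diameter_le_of_subset_ball)
  show "Q m \<alpha> \<subseteq> ball (x m \<alpha>) (C1 * \<delta> powr of_int m)"
    by (rule dyadic_outer_ball[OF D \<alpha>])
  show "0 \<le> C1 * \<delta> powr of_int m" using dyadic_param[OF D] by auto
qed

theorem proposition3p1:
  fixes I :: "int \<Rightarrow> 'i set" and Q :: "int \<Rightarrow> 'i \<Rightarrow> 'a::metric_space set"
    and x :: "int \<Rightarrow> 'i \<Rightarrow> 'a" and \<delta> c1 C1 :: real and m :: int and \<alpha> :: 'i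
  assumes "geometrically_doubling TYPE('a)"
    and "dyadic_system \<delta> c1 C1 I Q x"
    and "\<alpha> \<in> I m"
  shows "d_plump \<delta> m c1 (c1 + C1) (Q m \<alpha>)
       \<and> d_plump \<delta> m c1 (c1 + C1) (UNIV - Q m \<alpha>)
       \<and> (diameter (Q m \<alpha>) > 0 \<longrightarrow>
           plump ((c1 + C1) / (2 * \<delta> * C1) * diameter (Q m \<alpha>)) (\<delta> * c1 / (c1 + C1)) (Q m \<alpha>))"
proof -
  note D = assms(2)
  have resolved: "dyadic_resolved I Q m (Q m \<alpha>)" by (rule dyadic_resolved_cube[OF D assms(3)])
  have cube: "d_plump \<delta> m c1 (c1 + C1) (Q m \<alpha>)" by (rule dyadic_resolved_d_plump[OF D resolved])
  have complement: "d_plump \<delta> m c1 (c1 + C1) (UNIV - Q m \<alpha>)"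
    by (rule dyadic_resolved_d_plump[OF D dyadic_resolved_complement[OF resolved]])
  have "plump ((c1 + C1) / (2 * \<delta> * C1) * diameter (Q m \<alpha>)) (\<delta> * c1 / (c1 + C1)) (Q m \<alpha>)"
    if diam: "diameter (Q m \<alpha>) > 0"
  proof (rule d_plump_imp_plump[OF cube])
    have d0: "0 < \<delta>" "\<delta> < 1" and c: "0 < c1" "c1 \<le> C1"
      using dyadic_param[OF D] by auto
    then show "0 < (c1 + C1) / (2 * \<delta> * C1) * diameter (Q m \<alpha>)" using diam by simp
    have "(c1 + C1) / (2 * \<delta> * C1) * diameter (Q m \<alpha>)
            \<le> (c1 + C1) / (2 * \<delta> * C1) * (2 * (C1 * \<delta> powr of_int m))"
      using dyadic_cube_diameter[OF D assms(3)] d0 c by (intro mult_left_mono) auto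
    also have "\<dots> = (c1 + C1) * \<delta> powr of_int (m - 1)"
      using d0 c by (simp add: powr_diff field_simps)
    finally show "(c1 + C1) / (2 * \<delta> * C1) * diameter (Q m \<alpha>) \<le> (c1 + C1) * \<delta> powr of_int (m - 1)" .
  qed
  then show ?thesis using cube complement by blast
qed

end
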